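(* Let $\Omega\subset\mathbb{C}$ be a simply connected domain, let $(h,\mathcal{M},\mathcal{N})$ be a Weierstrass data of the second kind on $\Omega$, and let $\tau\in\mathbb{R}$. Set $h_\tau:=e^{-i\tau}h$ and $\mathcal{N}_\tau:=\mathcal{N}$. Then there exists a $\mathcal{C}^2$ function $\mathcal{M}_\tau:\Omega\to\mathbb{R}$ satisfying $$(\mathcal{M}_\tau)_z=e^{i\tau}\mathcal{M}_z-\frac{e^{i\tau}-e^{-i\tau}}{2}\,h\,\mathcal{N}_z,$$ and for any such $\mathcal{M}_\tau$ the triple $(h_\tau,\mathcal{M}_\tau,\mathcal{N}_\tau)$ is a Weierstrass data of the second kind on $\Omega$.
   Context: $\Omega\subset\mathbb{R}^2\equiv\mathbb{C}$ has complex coordinate $z=u+iv$, and $\partial_z=\frac12(\partial_u-i\partial_v)$, $\partial_{\overline z}=\frac12(\partial_u+i\partial_v)$; subscripts denote partial derivatives. A Weierstrass data of the second kind on $\Omega$ is a triple $(h,\mathcal{M},\mathcal{N})$ where $h:\Omega\to\mathbb{C}\setminus\{0\}$ and $\mathcal{M},\mathcal{N}:\Omega\to\mathbb{R}$ are $\mathcal{C}^2$, satisfying $h_{\overline z}=0$, $\mathcal{M}_{z\overline z}=(\mathrm{Re}\,h)\,\mathcal{N}_{z\overline z}$, and $\mathcal{M}_z-(\mathrm{Re}\,h)\,\mathcal{N}_z\neq0$ at every point of $\Omega$. *)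

theory Defs
  imports "HOL-Analysis.Analysis"
begin

text \<open>With w = 1 this is the u-derivative, with w = i
  the v-derivative (z = u + i v).\<close>
definition pd :: "(complex \<Rightarrow> 'a::real_normed_vector) \<Rightarrow> complex \<Rightarrow> complex \<Rightarrow> 'a" where
  "pd f w z = frechet_derivative f (at z) w"

definition Dz :: "(complex \<Rightarrow> complex) \<Rightarrow> complex \<Rightarrow> complex" where
  "Dz f z = (pd f 1 z - \<i> * pd f \<i> z) / 2"

definition Dzbar :: "(complex \<Rightarrow> complex) \<Rightarrow> complex \<Rightarrow> complex" where
  "Dzbar f z = (pd f 1 z + \<i> * pd f \<i> z) / 2"

definition C2_on :: "complex set \<Rightarrow> (complex \<Rightarrow> 'a::real_normed_vector) \<Rightarrow> bool" where
  "C2_on \<Omega> f \<longleftrightarrow>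
     f differentiable_on \<Omega> \<and>
     (\<forall>w \<in> {1, \<i>}. (\<lambda>z. pd f w z) differentiable_on \<Omega>) \<and>
     (\<forall>w \<in> {1, \<i>}. \<forall>w' \<in> {1, \<i>}. continuous_on \<Omega> (\<lambda>z. pd (\<lambda>x. pd f w x) w' z))"

definition weierstrass_data_2 ::
  "complex set \<Rightarrow> (complex \<Rightarrow> complex) \<Rightarrow> (complex \<Rightarrow> real) \<Rightarrow> (complex \<Rightarrow> real) \<Rightarrow> bool" where
  "weierstrass_data_2 \<Omega> h M N \<longleftrightarrow>
     C2_on \<Omega> h \<and> C2_on \<Omega> M \<and> C2_on \<Omega> N \<and>
     (\<forall>z \<in> \<Omega>. h z \<noteq> 0) \<and>
     (\<forall>z \<in> \<Omega>. Dzbar h z = 0) \<and>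
     (\<forall>z \<in> \<Omega>. Dzbar (Dz (\<lambda>x. complex_of_real (M x))) z
                = complex_of_real (Re (h z)) * Dzbar (Dz (\<lambda>x. complex_of_real (N x))) z) \<and>
     (\<forall>z \<in> \<Omega>. Dz (\<lambda>x. complex_of_real (M x)) z
                - complex_of_real (Re (h z)) * Dz (\<lambda>x. complex_of_real (N x)) z \<noteq> 0)"

end

theory Submission
  imports Defs "HOL-Complex_Analysis.Riemann_Mapping"
begin

text \<open>Let \<open>G\<close> be the prescribed value of \<open>Dz M\<^sub>\<tau>\<close>. A real function \<open>g\<close> has \<open>Dz g = G\<close>
  iff \<open>dg = Re (2 G dz)\<close>, so one has to show that this real 1-form is closed, i.e. that
  \<open>Dzbar G\<close> is real. As \<open>h\<close> is holomorphic and \<open>Dzbar (Dz M) = Re h * Dzbar (Dz N)\<close>,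
  \<open>Dzbar G = (e\<^sup>i\<^sup>\<tau> Re h - i sin \<tau> h) Dzbar (Dz N) = Re (e\<^sup>-\<^sup>i\<^sup>\<tau> h) Dzbar (Dz N)\<close>, and
  \<open>Dzbar (Dz N) = \<Delta>N / 4\<close> is real by the symmetry of second derivatives. A closed form is exact
  on the disc (integrate along rays) and hence, by the Riemann mapping theorem, on every simply
  connected domain. For any such \<open>M\<^sub>\<tau>\<close> the same computation gives the second-order equation
  for the rotated data, and \<open>Dz M\<^sub>\<tau> - Re h\<^sub>\<tau> Dz N = e\<^sup>i\<^sup>\<tau> (Dz M - Re h Dz N) \<noteq> 0\<close>.\<close>

section \<open>Wirtinger calculus\<close>

lemma pd_eq: "(f has_derivative f') (at z) \<Longrightarrow> pd f w z = f' w"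
  by (simp add: pd_def frechet_derivative_at[symmetric])

lemma has_derivative_pd: "f differentiable (at z) \<Longrightarrow> (f has_derivative (\<lambda>w. pd f w z)) (at z)"
  unfolding pd_def by (metis frechet_derivative_works eta_contract_eq)

lemma pd_cong:
  assumes "open S" "z \<in> S" "\<And>x. x \<in> S \<Longrightarrow> f x = g x"
  shows "pd f w z = pd g w z"
proof -
  have "(f has_derivative D) (at z) \<longleftrightarrow> (g has_derivative D) (at z)" for D
    using assms has_derivative_transform_within_open[of _ _ z UNIV S] by metis
  then show ?thesis unfolding pd_def frechet_derivative_def by simp
qed

lemma differentiable_cong_open:
  assumes "open S" "z \<in> S" "\<And>x. x \<in> S \<Longrightarrow> f x = g x" "f differentiable (at z)"
  shows "g differentiable (at z)"
  using assms has_derivative_transform_within_open[of f _ z UNIV S g]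
  unfolding differentiable_def by blast

lemma linear_complex_eq:
  fixes L :: "complex \<Rightarrow> 'a::real_normed_vector"
  assumes "linear L"
  shows "L w = Re w *\<^sub>R L 1 + Im w *\<^sub>R L \<i>"
proof -
  have "w = Re w *\<^sub>R 1 + Im w *\<^sub>R \<i>" by (simp add: complex_eq_iff)
  then have "L w = L (Re w *\<^sub>R 1 + Im w *\<^sub>R \<i>)" by simp
  also have "\<dots> = Re w *\<^sub>R L 1 + Im w *\<^sub>R L \<i>"
    using assms by (simp add: linear_add linear_scale)
  finally show ?thesis .
qed

lemma has_derivative_Wirtinger:
  fixes f :: "complex \<Rightarrow> complex"
  assumes "f differentiable (at z)"
  shows "(f has_derivative (\<lambda>w. Dz f z * w + Dzbar f z * cnj w)) (at z)"
proof -
  have D: "(f has_derivative (\<lambda>w. pd f w z)) (at z)"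
    using assms by (rule has_derivative_pd)
  have "pd f w z = Dz f z * w + Dzbar f z * cnj w" for w
    unfolding linear_complex_eq[OF has_derivative_linear[OF D], of w]
    by (simp add: Dz_def Dzbar_def complex_eq_iff scaleR_conv_of_real field_simps)
  then show ?thesis using D by simp
qed

lemma Wirtinger_eqI:
  fixes f :: "complex \<Rightarrow> complex"
  assumes "(f has_derivative (\<lambda>w. a * w + b * cnj w)) (at z)"
  shows "Dz f z = a" "Dzbar f z = b"
  using pd_eq[OF assms] by (simp_all add: Dz_def Dzbar_def algebra_simps)

lemma Dz_of_real_eqI:
  fixes g :: "complex \<Rightarrow> real"
  assumes "(g has_derivative (\<lambda>w. Re (p * w))) (at z)"
  shows "Dz (\<lambda>x. complex_of_real (g x)) z = p / 2"
proof -
  have "complex_of_real (Re (p * w)) = p / 2 * w + cnj p / 2 * cnj w" for w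
    by (simp add: complex_eq_iff field_simps)
  moreover have "((\<lambda>x. complex_of_real (g x)) has_derivative (\<lambda>w. complex_of_real (Re (p * w)))) (at z)"
    using assms by (auto intro!: derivative_eq_intros)
  ultimately have "((\<lambda>x. complex_of_real (g x)) has_derivative (\<lambda>w. p / 2 * w + cnj p / 2 * cnj w)) (at z)"
    by simp
  then show ?thesis by (rule Wirtinger_eqI(1))
qed

lemma Dzbar_cmult:
  fixes f :: "complex \<Rightarrow> complex"
  assumes "f differentiable (at z)"
  shows "Dzbar (\<lambda>x. c * f x) z = c * Dzbar f z"
proof -
  have "((\<lambda>x. c * f x) has_derivative (\<lambda>w. (c * Dz f z) * w + (c * Dzbar f z) * cnj w)) (at z)"
    using has_derivative_mult_right[OF has_derivative_Wirtinger[OF assms], of c]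
    by (simp add: algebra_simps)
  then show ?thesis by (rule Wirtinger_eqI(2))
qed

lemma Dzbar_cong:
  assumes "open S" "z \<in> S" "\<And>x. x \<in> S \<Longrightarrow> f x = g x"
  shows "Dzbar f z = Dzbar g z"
  unfolding Dzbar_def using pd_cong[OF assms] by simp

lemma C2_onD:
  assumes "open S" "C2_on S f" "z \<in> S"
  shows "f differentiable (at z)" "pd f 1 differentiable (at z)" "pd f \<i> differentiable (at z)"
  using assms by (auto simp: C2_on_def differentiable_on_eq_differentiable_at)

lemma C2_on_continuous_pd:
  assumes "open S" "C2_on S f" "w \<in> {1, \<i>}"
  shows "continuous_on S (pd f w)"
  using assms by (auto simp: C2_on_def intro: differentiable_imp_continuous_on)

lemma C2_on_continuous_pd_pd:
  assumes "C2_on S f" "w \<in> {1, \<i>}" "w' \<in> {1, \<i>}"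
  shows "continuous_on S (pd (pd f w) w')"
  using assms by (auto simp: C2_on_def)

lemma pd_bounded_linear:
  assumes "bounded_linear T" "f differentiable (at z)"
  shows "pd (\<lambda>x. T (f x)) w z = T (pd f w z)"
  by (rule pd_eq) (rule bounded_linear.has_derivative[OF assms(1) has_derivative_pd[OF assms(2)]])

lemma pd_pd_bounded_linear:
  assumes T: "bounded_linear T" and S: "open S" and C: "C2_on S f" and z: "z \<in> S" and w: "w \<in> {1, \<i>}"
  shows "pd (pd (\<lambda>z. T (f z)) w) w' z = T (pd (pd f w) w' z)"
proof -
  have "pd (pd (\<lambda>z. T (f z)) w) w' z = pd (\<lambda>x. T (pd f w x)) w' z"
    by (rule pd_cong[OF S z]) (simp add: pd_bounded_linear[OF T] C2_onD(1)[OF S C])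
  also have "\<dots> = T (pd (pd f w) w' z)"
    using pd_bounded_linear[OF T] C2_onD(2,3)[OF S C z] w by auto
  finally show ?thesis .
qed

lemma C2_on_bounded_linear:
  fixes f :: "complex \<Rightarrow> 'a::real_normed_vector" and T :: "'a \<Rightarrow> 'b::real_normed_vector"
  assumes T: "bounded_linear T" and S: "open S" and C: "C2_on S f"
  shows "C2_on S (\<lambda>z. T (f z))"
  unfolding C2_on_def
proof (intro conjI ballI)
  have diffT: "(\<lambda>x. T (g x)) differentiable (at z)" if "g differentiable (at z)" for g :: "complex \<Rightarrow> 'a" and z
    using that bounded_linear.has_derivative[OF T] unfolding differentiable_def by blast
  show "(\<lambda>z. T (f z)) differentiable_on S"
    using C2_onD(1)[OF S C] diffT by (simp add: S differentiable_on_eq_differentiable_at)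
  fix w assume w: "w \<in> {1, \<i>}"
  show "pd (\<lambda>z. T (f z)) w differentiable_on S"
    unfolding differentiable_on_eq_differentiable_at[OF S]
  proof
    fix z assume z: "z \<in> S"
    have "pd f w differentiable (at z)" using C2_onD(2,3)[OF S C z] w by auto
    then show "pd (\<lambda>z. T (f z)) w differentiable (at z)"
      by (rule differentiable_cong_open[OF S z, rotated, OF diffT])
         (simp add: pd_bounded_linear[OF T] C2_onD(1)[OF S C])
  qed
  fix w' assume "w' \<in> {1, \<i>}"
  then have "continuous_on S (\<lambda>z. T (pd (pd f w) w' z))"
    using bounded_linear.continuous_on[OF T C2_on_continuous_pd_pd[OF C w]] by blast
  then show "continuous_on S (pd (pd (\<lambda>z. T (f z)) w) w')"
    by (rule continuous_on_eq) (simp add: pd_pd_bounded_linear[OF T S C _ w])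
qed

lemma C2_on_of_real:
  fixes F :: "complex \<Rightarrow> real"
  assumes "open S" "C2_on S F"
  shows "C2_on S (\<lambda>x. complex_of_real (F x))"
  using C2_on_bounded_linear[OF bounded_linear_of_real assms] .

lemma has_derivative_Dz:
  assumes "open S" "C2_on S f" "z \<in> S"
  shows "(Dz f has_derivative (\<lambda>w. (pd (pd f 1) w z - \<i> * pd (pd f \<i>) w z) / 2)) (at z)"
  unfolding Dz_def[abs_def]
  using has_derivative_pd C2_onD(2,3)[OF assms] by (auto intro!: derivative_eq_intros)

lemma Dzbar_Dz_eq:
  assumes "open S" "C2_on S f" "z \<in> S"
  shows "Dzbar (Dz f) z = (pd (pd f 1) 1 z + pd (pd f \<i>) \<i> z + \<i> * (pd (pd f 1) \<i> z - pd (pd f \<i>) 1 z)) / 4"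
  unfolding Dzbar_def pd_eq[OF has_derivative_Dz[OF assms]] by (simp add: field_simps)

lemma C2_on_continuous_Wirtinger:
  assumes S: "open S" and C: "C2_on S f"
  shows "continuous_on S (Dz f)" "continuous_on S (Dzbar f)"
    and "continuous_on S (Dz (Dz f))" "continuous_on S (Dzbar (Dz f))"
proof -
  note c1 = C2_on_continuous_pd[OF S C, of 1] C2_on_continuous_pd[OF S C, of \<i>]
  note c2 = C2_on_continuous_pd_pd[OF C, of 1 1] C2_on_continuous_pd_pd[OF C, of 1 \<i>]
    C2_on_continuous_pd_pd[OF C, of \<i> 1] C2_on_continuous_pd_pd[OF C, of \<i> \<i>]
  show "continuous_on S (Dz f)" "continuous_on S (Dzbar f)"
    unfolding Dz_def[abs_def] Dzbar_def[abs_def] using c1 by (auto intro!: continuous_intros)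
  have DzDz: "Dz (Dz f) z = (pd (pd f 1) 1 z - \<i> * pd (pd f \<i>) 1 z
      - \<i> * (pd (pd f 1) \<i> z - \<i> * pd (pd f \<i>) \<i> z)) / 4" if "z \<in> S" for z
    unfolding Dz_def[of "Dz f"] pd_eq[OF has_derivative_Dz[OF S C that]] by (simp add: field_simps)
  show "continuous_on S (Dz (Dz f))"
    by (rule continuous_on_eq[where f = "\<lambda>z. (pd (pd f 1) 1 z - \<i> * pd (pd f \<i>) 1 z
      - \<i> * (pd (pd f 1) \<i> z - \<i> * pd (pd f \<i>) \<i> z)) / 4"])
       (use c2 DzDz in \<open>auto intro!: continuous_intros\<close>)
  show "continuous_on S (Dzbar (Dz f))"
    by (rule continuous_on_eq[where f = "\<lambda>z. (pd (pd f 1) 1 z + pd (pd f \<i>) \<i> z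
      + \<i> * (pd (pd f 1) \<i> z - pd (pd f \<i>) 1 z)) / 4"])
       (use c2 Dzbar_Dz_eq[OF S C] in \<open>auto intro!: continuous_intros\<close>)
qed

section \<open>Symmetry of second derivatives\<close>

lemma second_difference_mean_value:
  fixes F :: "complex \<Rightarrow> real"
  assumes S: "open S" and F: "F differentiable_on S" and s: "0 < s"
    and inS: "\<And>t. t \<in> {0..s} \<Longrightarrow> z + t *\<^sub>R a \<in> S \<and> z + t *\<^sub>R a + s *\<^sub>R b \<in> S"
  shows "\<exists>\<theta>\<in>{0<..<s}. F (z + s *\<^sub>R a + s *\<^sub>R b) - F (z + s *\<^sub>R a) - F (z + s *\<^sub>R b) + F z
           = s * (pd F a (z + \<theta> *\<^sub>R a + s *\<^sub>R b) - pd F a (z + \<theta> *\<^sub>R a))"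
proof -
  have line: "((\<lambda>t. F (c + t *\<^sub>R a)) has_derivative (\<lambda>h. h * pd F a (c + t *\<^sub>R a))) (at t within {0..s})"
    if "c + t *\<^sub>R a \<in> S" for c t
  proof -
    have "F differentiable (at (c + t *\<^sub>R a))"
      using F S that by (simp add: differentiable_on_eq_differentiable_at)
    then have D: "(F has_derivative (\<lambda>w. pd F w (c + t *\<^sub>R a))) (at (c + t *\<^sub>R a))"
      by (rule has_derivative_pd)
    have "((\<lambda>t. c + t *\<^sub>R a) has_derivative (\<lambda>h. h *\<^sub>R a)) (at t within {0..s})"
      by (auto intro!: derivative_eq_intros)
    from has_derivative_compose[OF this has_derivative_at_withinI[OF D]]
    show ?thesis using linear_scale[OF has_derivative_linear[OF D]] by (simp add: o_def)
  qed
  define \<phi> where "\<phi> t = F (z + s *\<^sub>R b + t *\<^sub>R a) - F (z + t *\<^sub>R a)" for t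
  have "(\<phi> has_derivative (\<lambda>h. h * (pd F a (z + s *\<^sub>R b + t *\<^sub>R a) - pd F a (z + t *\<^sub>R a)))) (at t within {0..s})"
    if "0 \<le> t" "t \<le> s" for t
  proof -
    have "z + s *\<^sub>R b + t *\<^sub>R a \<in> S" "z + t *\<^sub>R a \<in> S"
      using inS[of t] that by (simp_all add: add_ac)
    from has_derivative_diff[OF line[OF this(1)] line[OF this(2)]] show ?thesis
      unfolding \<phi>_def by (simp add: right_diff_distrib)
  qed
  from mvt_simple[OF s this] obtain \<theta> where "\<theta> \<in> {0<..<s}"
    and "\<phi> s - \<phi> 0 = (s - 0) * (pd F a (z + s *\<^sub>R b + \<theta> *\<^sub>R a) - pd F a (z + \<theta> *\<^sub>R a))"
    by blast
  then show ?thesis unfolding \<phi>_def by (intro bexI[of _ \<theta>]) (simp_all add: add_ac)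
qed

lemma has_derivative_increment_bound:
  fixes G :: "'a::real_normed_vector \<Rightarrow> 'b::real_normed_vector"
  assumes G: "(G has_derivative L) (at z)" and e: "e > 0"
  shows "\<exists>d>0. \<forall>u v. norm u < d \<longrightarrow> norm v < d \<longrightarrow>
           norm (G (z + u) - G (z + v) - L (u - v)) \<le> e * (norm u + norm v)"
proof -
  obtain d where d: "d > 0"
    "\<And>y. norm (y - z) < d \<Longrightarrow> norm (G y - G z - L (y - z)) \<le> e * norm (y - z)"
    using G e unfolding has_derivative_at_alt by blast
  have lin: "linear L" using G has_derivative_linear by blast
  have "norm (G (z + u) - G (z + v) - L (u - v)) \<le> e * (norm u + norm v)"
    if "norm u < d" "norm v < d" for u v
  proof -
    have "G (z + u) - G (z + v) - L (u - v) = (G (z + u) - G z - L u) - (G (z + v) - G z - L v)"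
      by (simp add: linear_diff[OF lin])
    also have "norm \<dots> \<le> norm (G (z + u) - G z - L u) + norm (G (z + v) - G z - L v)"
      by (rule norm_triangle_ineq4)
    also have "\<dots> \<le> e * norm u + e * norm v"
      using d(2)[of "z + u"] d(2)[of "z + v"] that by (intro add_mono) simp_all
    finally show ?thesis by (simp add: distrib_left)
  qed
  then show ?thesis using d(1) by blast
qed

lemma second_difference_estimate:
  fixes F :: "complex \<Rightarrow> real"
  assumes S: "open S" "z \<in> S" and F: "F differentiable_on S"
    and na: "norm a = 1" and nb: "norm b = 1"
    and L: "(pd F a has_derivative L) (at z)" and e: "e > 0"
  shows "\<exists>d>0. \<forall>s. 0 < s \<and> s < d \<longrightarrow>
     \<bar>F (z + s *\<^sub>R a + s *\<^sub>R b) - F (z + s *\<^sub>R a) - F (z + s *\<^sub>R b) + F z - s\<^sup>2 * L b\<bar> \<le> 4 * e * s\<^sup>2"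
proof -
  obtain d1 where d1: "d1 > 0" "\<And>u v. norm u < d1 \<Longrightarrow> norm v < d1 \<Longrightarrow>
      \<bar>pd F a (z + u) - pd F a (z + v) - L (u - v)\<bar> \<le> e * (norm u + norm v)"
    using has_derivative_increment_bound[OF L e] unfolding real_norm_def by blast
  obtain r where r: "r > 0" "ball z r \<subseteq> S" using S open_contains_ball by blast
  have lin: "linear L" using L has_derivative_linear by blast
  define d where "d = min d1 r / 2"
  show ?thesis
  proof (intro exI[of _ d] conjI allI impI)
    show "d > 0" using d1 r by (simp add: d_def)
    fix s :: real assume s: "0 < s \<and> s < d"
    have near: "norm (t *\<^sub>R a + u *\<^sub>R b) \<le> 2 * s" if "t \<in> {0..s}" "u \<in> {0..s}" for t u
      using norm_triangle_ineq[of "t *\<^sub>R a" "u *\<^sub>R b"] that na nb by simp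
    have "z + t *\<^sub>R a + u *\<^sub>R b \<in> S" if "t \<in> {0..s}" "u \<in> {0..s}" for t u
    proof -
      have "z + (t *\<^sub>R a + u *\<^sub>R b) \<in> ball z r"
        using near[OF that] s norm_minus_cancel[of "t *\<^sub>R a + u *\<^sub>R b"] by (simp add: dist_norm d_def)
      then show ?thesis using r(2) by (auto simp: add.assoc)
    qed
    then obtain \<theta> where \<theta>: "\<theta> \<in> {0<..<s}" and mv:
      "F (z + s *\<^sub>R a + s *\<^sub>R b) - F (z + s *\<^sub>R a) - F (z + s *\<^sub>R b) + F z
        = s * (pd F a (z + \<theta> *\<^sub>R a + s *\<^sub>R b) - pd F a (z + \<theta> *\<^sub>R a))"
      using second_difference_mean_value[OF S(1) F, of s z a b] s by fastforce
    define X where "X = pd F a (z + \<theta> *\<^sub>R a + s *\<^sub>R b) - pd F a (z + \<theta> *\<^sub>R a)"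
    have bound: "\<bar>X - s * L b\<bar> \<le> e * (2 * s + 2 * s)"
      using d1(2)[of "\<theta> *\<^sub>R a + s *\<^sub>R b" "\<theta> *\<^sub>R a"] near[of \<theta> s] near[of \<theta> 0] \<theta> s e
      by (simp add: X_def add.assoc d_def linear_scale[OF lin] mult_left_mono order_trans)
    have "s * X - s\<^sup>2 * L b = s * (X - s * L b)" by (simp add: power2_eq_square algebra_simps)
    then have "\<bar>s * X - s\<^sup>2 * L b\<bar> = s * \<bar>X - s * L b\<bar>" using s by (simp add: abs_mult)
    also have "\<dots> \<le> s * (e * (2 * s + 2 * s))" by (rule mult_left_mono) (use bound s in auto)
    also have "\<dots> = 4 * e * s\<^sup>2" by (simp add: power2_eq_square algebra_simps)
    finally have "\<bar>s * X - s\<^sup>2 * L b\<bar> \<le> 4 * e * s\<^sup>2" .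
    then show "\<bar>F (z + s *\<^sub>R a + s *\<^sub>R b) - F (z + s *\<^sub>R a) - F (z + s *\<^sub>R b) + F z - s\<^sup>2 * L b\<bar> \<le> 4 * e * s\<^sup>2"
      by (simp only: mv X_def)
  qed
qed

text \<open>Both mixed partials are the limit of the same normalised second difference
  \<open>s\<^sup>-\<^sup>2 (F (z + s + s\<i>) - F (z + s) - F (z + s\<i>) + F z)\<close>.\<close>
lemma pd_pd_commute:
  fixes F :: "complex \<Rightarrow> real"
  assumes S: "open S" "z \<in> S" and F: "F differentiable_on S"
    and D1: "pd F 1 differentiable (at z)" and Di: "pd F \<i> differentiable (at z)"
  shows "pd (pd F 1) \<i> z = pd (pd F \<i>) 1 z"
proof (rule ccontr)
  define \<delta> where "\<delta> = \<bar>pd (pd F 1) \<i> z - pd (pd F \<i>) 1 z\<bar>"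
  assume "pd (pd F 1) \<i> z \<noteq> pd (pd F \<i>) 1 z"
  then have e: "\<delta> / 16 > 0" by (simp add: \<delta>_def)
  obtain d1 where d1: "d1 > 0" "\<And>s. 0 < s \<and> s < d1 \<Longrightarrow>
       \<bar>F (z + s *\<^sub>R 1 + s *\<^sub>R \<i>) - F (z + s *\<^sub>R 1) - F (z + s *\<^sub>R \<i>) + F z - s\<^sup>2 * pd (pd F 1) \<i> z\<bar> \<le> 4 * (\<delta> / 16) * s\<^sup>2"
    using second_difference_estimate[OF S F _ _ has_derivative_pd[OF D1] e, of \<i>] by auto
  obtain d2 where d2: "d2 > 0" "\<And>s. 0 < s \<and> s < d2 \<Longrightarrow>
       \<bar>F (z + s *\<^sub>R \<i> + s *\<^sub>R 1) - F (z + s *\<^sub>R \<i>) - F (z + s *\<^sub>R 1) + F z - s\<^sup>2 * pd (pd F \<i>) 1 z\<bar> \<le> 4 * (\<delta> / 16) * s\<^sup>2"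
    using second_difference_estimate[OF S F _ _ has_derivative_pd[OF Di] e, of 1] by auto
  define s where "s = min d1 d2 / 2"
  have s: "0 < s" "s < d1" "s < d2" using d1 d2 by (auto simp: s_def)
  let ?X = "F (z + s *\<^sub>R 1 + s *\<^sub>R \<i>) - F (z + s *\<^sub>R 1) - F (z + s *\<^sub>R \<i>) + F z"
  have swap: "z + s *\<^sub>R \<i> + s *\<^sub>R 1 = z + s *\<^sub>R 1 + s *\<^sub>R \<i>" by (simp add: algebra_simps)
  have "F (z + s *\<^sub>R \<i> + s *\<^sub>R 1) - F (z + s *\<^sub>R \<i>) - F (z + s *\<^sub>R 1) + F z = ?X"
    unfolding swap by simp
  moreover have "\<bar>F (z + s *\<^sub>R \<i> + s *\<^sub>R 1) - F (z + s *\<^sub>R \<i>) - F (z + s *\<^sub>R 1) + F z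
      - s\<^sup>2 * pd (pd F \<i>) 1 z\<bar> \<le> 4 * (\<delta> / 16) * s\<^sup>2"
    using d2(2) s by blast
  ultimately have X2: "\<bar>?X - s\<^sup>2 * pd (pd F \<i>) 1 z\<bar> \<le> \<delta> / 4 * s\<^sup>2"
    by (simp add: algebra_simps)
  have "s\<^sup>2 * \<delta> = \<bar>(?X - s\<^sup>2 * pd (pd F \<i>) 1 z) - (?X - s\<^sup>2 * pd (pd F 1) \<i> z)\<bar>"
    by (simp add: \<delta>_def abs_mult flip: right_diff_distrib)
  also have "\<dots> \<le> \<bar>?X - s\<^sup>2 * pd (pd F \<i>) 1 z\<bar> + \<bar>?X - s\<^sup>2 * pd (pd F 1) \<i> z\<bar>"
    by (rule abs_triangle_ineq4)
  also have "\<dots> \<le> \<delta> / 4 * s\<^sup>2 + \<delta> / 4 * s\<^sup>2"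
    using X2 d1(2)[OF conjI[OF s(1,2)]] by simp
  finally have "s\<^sup>2 * \<delta> \<le> s\<^sup>2 * (\<delta> / 2)" by simp
  then show False using s e by (simp add: mult_le_cancel_left)
qed

lemma Im_Dzbar_Dz_of_real:
  fixes F :: "complex \<Rightarrow> real"
  assumes S: "open S" and C: "C2_on S F" and z: "z \<in> S"
  shows "Im (Dzbar (Dz (\<lambda>x. complex_of_real (F x))) z) = 0"
proof -
  note R = bounded_linear_of_real[where 'a = complex]
  have "pd (pd F 1) \<i> z = pd (pd F \<i>) 1 z"
    using pd_pd_commute[OF S z] C2_onD[OF S C z] C by (simp add: C2_on_def)
  then have "Dzbar (Dz (\<lambda>x. complex_of_real (F x))) z = of_real ((pd (pd F 1) 1 z + pd (pd F \<i>) \<i> z) / 4)"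
    using Dzbar_Dz_eq[OF S C2_on_of_real[OF S C] z] pd_pd_bounded_linear[OF R S C z]
    by (simp add: field_simps)
  then show ?thesis by (metis Im_complex_of_real)
qed

section \<open>Primitives of closed real 1-forms\<close>

text \<open>\<open>radial_kernel P \<alpha> \<beta> x t\<close> is the \<open>t\<close>-derivative of \<open>t * P (t x)\<close>.\<close>
definition radial_kernel ::
  "(complex \<Rightarrow> complex) \<Rightarrow> (complex \<Rightarrow> complex) \<Rightarrow> (complex \<Rightarrow> complex) \<Rightarrow> complex \<Rightarrow> real \<Rightarrow> complex" where
  "radial_kernel P \<alpha> \<beta> x t =
     of_real t * \<alpha> (of_real t * x) * x + P (of_real t * x) + of_real t * \<beta> (of_real t * x) * cnj x"

lemma has_integral_radial_kernel:
  assumes DP: "\<And>t. t \<in> {0..1} \<Longrightarrow>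
      (P has_derivative (\<lambda>w. \<alpha> (of_real t * x) * w + \<beta> (of_real t * x) * cnj w)) (at (of_real t * x))"
  shows "((\<lambda>t. Re (radial_kernel P \<alpha> \<beta> x t * w)) has_integral Re (P x * w)) {0..1}"
proof -
  define F where "F t = t * Re (P (of_real t * x) * w)" for t :: real
  have "((\<lambda>t. Re (radial_kernel P \<alpha> \<beta> x t * w)) has_integral (F 1 - F 0)) {0..1}"
  proof (rule fundamental_theorem_of_calculus)
    fix t :: real assume t: "t \<in> {0..1}"
    have "((\<lambda>t. of_real t * x) has_derivative (\<lambda>h. of_real h * x)) (at t within {0..1})"
      by (auto intro!: derivative_eq_intros)
    from has_derivative_compose[OF this has_derivative_at_withinI[OF DP[OF t]]]
    have "((\<lambda>t. P (of_real t * x)) has_derivative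
        (\<lambda>h. \<alpha> (of_real t * x) * (of_real h * x) + \<beta> (of_real t * x) * cnj (of_real h * x))) (at t within {0..1})"
      by (simp add: o_def)
    then have "(F has_derivative (\<lambda>h. h * Re (P (of_real t * x) * w) + t * Re ((\<alpha> (of_real t * x) * (of_real h * x)
        + \<beta> (of_real t * x) * cnj (of_real h * x)) * w))) (at t within {0..1})"
      unfolding F_def by (auto intro!: derivative_eq_intros)
    then show "(F has_vector_derivative Re (radial_kernel P \<alpha> \<beta> x t * w)) (at t within {0..1})"
      unfolding has_vector_derivative_def
      by (rule has_derivative_eq_rhs) (simp add: fun_eq_iff radial_kernel_def algebra_simps)
  qed simp
  then show ?thesis by (simp add: F_def)
qed

text \<open>This is where the closedness condition enters: for real \<open>\<beta>\<close> the two mixed terms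
  \<open>Re (\<beta> cnj w x)\<close> and \<open>Re (\<beta> cnj x w)\<close> agree.\<close>
lemma has_derivative_radial_integrand:
  assumes DP: "(P has_derivative (\<lambda>w. \<alpha> (of_real t * x) * w + \<beta> (of_real t * x) * cnj w)) (at (of_real t * x))"
    and real: "Im (\<beta> (of_real t * x)) = 0"
  shows "((\<lambda>x. Re (P (of_real t * x) * x)) has_derivative (\<lambda>w. Re (radial_kernel P \<alpha> \<beta> x t * w))) (at x within U)"
proof -
  have "((\<lambda>x. of_real t * x) has_derivative (\<lambda>w. of_real t * w)) (at x within U)"
    by (auto intro!: derivative_eq_intros)
  from has_derivative_compose[OF this has_derivative_at_withinI[OF DP]]
  have "((\<lambda>x. P (of_real t * x)) has_derivative (\<lambda>w. \<alpha> (of_real t * x) * (of_real t * w)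
      + \<beta> (of_real t * x) * cnj (of_real t * w))) (at x within U)"
    by (simp add: o_def)
  then have "((\<lambda>x. Re (P (of_real t * x) * x)) has_derivative (\<lambda>w. Re ((\<alpha> (of_real t * x) * (of_real t * w)
      + \<beta> (of_real t * x) * cnj (of_real t * w)) * x + P (of_real t * x) * w))) (at x within U)"
    by (auto intro!: derivative_eq_intros)
  then show ?thesis
    by (rule has_derivative_eq_rhs) (use real in \<open>simp add: fun_eq_iff radial_kernel_def algebra_simps\<close>)
qed

lemma continuous_on_radial_kernel:
  assumes star: "\<And>z t. z \<in> S \<Longrightarrow> t \<in> {0..1} \<Longrightarrow> of_real t * z \<in> S"
    and cont: "continuous_on S P" "continuous_on S \<alpha>" "continuous_on S \<beta>"
  shows "continuous_on (S \<times> {0..1}) (\<lambda>(x, t). radial_kernel P \<alpha> \<beta> x t)"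
proof -
  have scale: "continuous_on (S \<times> {0..1}) (\<lambda>p::complex \<times> real. of_real (snd p) * fst p)"
    by (intro continuous_intros)
  have into: "(\<lambda>p. of_real (snd p) * fst p) ` (S \<times> {0..1}) \<subseteq> S"
    using star by auto
  note comp = continuous_on_compose2[OF _ scale into]
  show ?thesis
    unfolding radial_kernel_def split_beta
    by (intro continuous_intros comp[OF cont(1)] comp[OF cont(2)] comp[OF cont(3)])
qed

text \<open>The library's Leibniz rule is stated for \<open>blinfun\<close>-valued derivatives, whence the detour
  through \<open>D\<close>.\<close>
lemma has_derivative_radial_integral:
  fixes P \<alpha> \<beta> :: "complex \<Rightarrow> complex"
  assumes S: "open S" and star: "\<And>z t. z \<in> S \<Longrightarrow> t \<in> {0..1} \<Longrightarrow> of_real t * z \<in> S"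
    and DP: "\<And>z. z \<in> S \<Longrightarrow> (P has_derivative (\<lambda>w. \<alpha> z * w + \<beta> z * cnj w)) (at z)"
    and cont: "continuous_on S \<alpha>" "continuous_on S \<beta>"
    and real: "\<And>z. z \<in> S \<Longrightarrow> Im (\<beta> z) = 0" and x0: "x0 \<in> S"
  shows "((\<lambda>x. integral {0..1} (\<lambda>t. Re (P (of_real t * x) * x))) has_derivative
           (\<lambda>w. integral {0..1} (\<lambda>t. Re (radial_kernel P \<alpha> \<beta> x0 t * w)))) (at x0)"
proof -
  have cP: "continuous_on S P"
    using DP has_derivative_continuous continuous_at_imp_continuous_on by blast
  define D where "D x t = blinfun_inner_left 1 o\<^sub>L blinfun_mult_right (radial_kernel P \<alpha> \<beta> x t)" for x t
  have D_apply: "blinfun_apply (D x t) w = Re (radial_kernel P \<alpha> \<beta> x t * w)" for x t w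
    by (simp add: D_def)
  have contD: "continuous_on (S \<times> {0..1}) (\<lambda>(x, t). D x t)"
    using continuous_on_radial_kernel[OF star cP cont] unfolding D_def split_beta
    by (intro continuous_intros)
  obtain r where r: "r > 0" "ball x0 r \<subseteq> S" using S x0 open_contains_ball by blast
  have "((\<lambda>x. integral (cbox 0 1) (\<lambda>t. Re (P (of_real t * x) * x))) has_derivative
      blinfun_apply (integral (cbox 0 1) (D x0))) (at x0 within ball x0 r)"
  proof (rule leibniz_rule)
    fix x t assume "x \<in> ball x0 r" "t \<in> cbox 0 (1::real)"
    then have "of_real t * x \<in> S" using r star by auto
    then show "((\<lambda>x. Re (P (of_real t * x) * x)) has_derivative blinfun_apply (D x t)) (at x within ball x0 r)"
      unfolding D_apply[abs_def] by (intro has_derivative_radial_integrand DP real)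
  next
    fix x assume "x \<in> ball x0 r"
    then have segment: "(\<lambda>t. of_real t * x) ` {0..1} \<subseteq> S" using r star by auto
    have "continuous_on {0..1} (\<lambda>t. P (of_real t * x))"
      by (rule continuous_on_compose2[OF cP _ segment]) (intro continuous_intros)
    then show "(\<lambda>t. Re (P (of_real t * x) * x)) integrable_on cbox 0 1"
      by (auto intro!: integrable_continuous_real continuous_intros)
  next
    show "continuous_on (ball x0 r \<times> cbox 0 1) (\<lambda>(x, t). D x t)"
      by (rule continuous_on_subset[OF contD]) (use r in auto)
  qed (use r in auto)
  moreover have "continuous_on {0..1} (\<lambda>t. (\<lambda>(x, t). D x t) (x0, t))"
    by (rule continuous_on_compose2[OF contD]) (use x0 in \<open>auto intro!: continuous_intros\<close>)
  then have "D x0 integrable_on {0..1}" by (simp add: integrable_continuous_real)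
  then have "blinfun_apply (integral {0..1} (D x0)) = (\<lambda>w. integral {0..1} (\<lambda>t. Re (radial_kernel P \<alpha> \<beta> x0 t * w)))"
    by (intro ext) (simp only: blinfun_apply_integral D_apply)
  ultimately show ?thesis
    using at_within_open[of x0 "ball x0 r"] r by simp
qed

lemma star_shaped_real_primitive:
  fixes P \<alpha> \<beta> :: "complex \<Rightarrow> complex"
  assumes S: "open S" and star: "\<And>z t. z \<in> S \<Longrightarrow> t \<in> {0..1} \<Longrightarrow> of_real t * z \<in> S"
    and DP: "\<And>z. z \<in> S \<Longrightarrow> (P has_derivative (\<lambda>w. \<alpha> z * w + \<beta> z * cnj w)) (at z)"
    and cont: "continuous_on S \<alpha>" "continuous_on S \<beta>"
    and real: "\<And>z. z \<in> S \<Longrightarrow> Im (\<beta> z) = 0"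
  shows "\<exists>g::complex \<Rightarrow> real. \<forall>z\<in>S. (g has_derivative (\<lambda>w. Re (P z * w))) (at z)"
proof (intro exI[of _ "\<lambda>x. integral {0..1} (\<lambda>t. Re (P (of_real t * x) * x))"] ballI)
  fix x0 assume x0: "x0 \<in> S"
  have "integral {0..1} (\<lambda>t. Re (radial_kernel P \<alpha> \<beta> x0 t * w)) = Re (P x0 * w)" for w
    by (rule integral_unique, rule has_integral_radial_kernel) (use DP star x0 in auto)
  then show "((\<lambda>x. integral {0..1} (\<lambda>t. Re (P (of_real t * x) * x))) has_derivative
      (\<lambda>w. Re (P x0 * w))) (at x0)"
    using has_derivative_radial_integral[OF S star DP cont real x0] by simp
qed

lemma has_derivative_pullback:
  fixes P \<alpha> \<beta> \<phi> :: "complex \<Rightarrow> complex"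
  assumes d0: "(\<phi> has_field_derivative deriv \<phi> w) (at w)"
    and d1: "(deriv \<phi> has_field_derivative deriv (deriv \<phi>) w) (at w)"
    and DP: "(P has_derivative (\<lambda>a. \<alpha> (\<phi> w) * a + \<beta> (\<phi> w) * cnj a)) (at (\<phi> w))"
  shows "((\<lambda>w. P (\<phi> w) * deriv \<phi> w) has_derivative
           (\<lambda>a. (\<alpha> (\<phi> w) * (deriv \<phi> w)\<^sup>2 + P (\<phi> w) * deriv (deriv \<phi>) w) * a
              + (\<beta> (\<phi> w) * deriv \<phi> w * cnj (deriv \<phi> w)) * cnj a)) (at w)"
proof -
  have "((\<lambda>w. P (\<phi> w)) has_derivative (\<lambda>a. \<alpha> (\<phi> w) * (deriv \<phi> w * a) + \<beta> (\<phi> w) * cnj (deriv \<phi> w * a))) (at w)"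
    using has_derivative_compose[OF d0[unfolded has_field_derivative_def] DP] by (simp add: o_def)
  from has_derivative_mult[OF this d1[unfolded has_field_derivative_def]] show ?thesis
    by (rule has_derivative_eq_rhs) (simp add: fun_eq_iff power2_eq_square algebra_simps)
qed

lemma real_primitive_pullback:
  fixes P \<phi> \<psi> :: "complex \<Rightarrow> complex" and G :: "complex \<Rightarrow> real"
  assumes S: "open S" and hol: "\<phi> holomorphic_on B" "\<psi> holomorphic_on S" "open B"
    and inv: "\<And>z. z \<in> S \<Longrightarrow> \<psi> z \<in> B \<and> \<phi> (\<psi> z) = z"
    and G: "\<And>w. w \<in> B \<Longrightarrow> (G has_derivative (\<lambda>a. Re (P (\<phi> w) * deriv \<phi> w * a))) (at w)"
    and z: "z \<in> S"
  shows "((\<lambda>z. G (\<psi> z)) has_derivative (\<lambda>a. Re (P z * a))) (at z)"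
proof -
  have \<psi>z: "\<psi> z \<in> B" using inv z by blast
  have d\<psi>: "(\<psi> has_field_derivative deriv \<psi> z) (at z)"
    using hol(2) S z by (simp add: holomorphic_derivI)
  have d\<phi>: "(\<phi> has_field_derivative deriv \<phi> (\<psi> z)) (at (\<psi> z))"
    using hol(1,3) \<psi>z by (simp add: holomorphic_derivI)
  have "((\<lambda>x. \<phi> (\<psi> x)) has_field_derivative deriv \<phi> (\<psi> z) * deriv \<psi> z) (at z)"
    using DERIV_chain[OF d\<phi> d\<psi>] by (simp add: o_def)
  moreover have "((\<lambda>x. \<phi> (\<psi> x)) has_field_derivative 1) (at z)"
    by (rule has_field_derivative_transform_within_open[OF DERIV_ident S z]) (use inv in simp)
  ultimately have chain: "deriv \<phi> (\<psi> z) * deriv \<psi> z = 1"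
    by (rule DERIV_unique)
  have "((\<lambda>z. G (\<psi> z)) has_derivative (\<lambda>a. Re (P (\<phi> (\<psi> z)) * deriv \<phi> (\<psi> z) * (deriv \<psi> z * a)))) (at z)"
    using has_derivative_compose[OF d\<psi>[unfolded has_field_derivative_def] G[OF \<psi>z]] by (simp add: o_def)
  then show ?thesis
    using chain inv z by (simp add: mult.assoc flip: mult.assoc[of "deriv \<phi> (\<psi> z)"])
qed

lemma disc_pullback_real_primitive:
  fixes P \<alpha> \<beta> \<phi> :: "complex \<Rightarrow> complex"
  assumes hol: "\<phi> holomorphic_on ball 0 1" and into: "\<phi> ` ball 0 1 \<subseteq> S"
    and DP: "\<And>z. z \<in> S \<Longrightarrow> (P has_derivative (\<lambda>w. \<alpha> z * w + \<beta> z * cnj w)) (at z)"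
    and cont: "continuous_on S \<alpha>" "continuous_on S \<beta>"
    and real: "\<And>z. z \<in> S \<Longrightarrow> Im (\<beta> z) = 0"
  shows "\<exists>G::complex \<Rightarrow> real. \<forall>w\<in>ball 0 1. (G has_derivative (\<lambda>a. Re (P (\<phi> w) * deriv \<phi> w * a))) (at w)"
proof (rule star_shaped_real_primitive)
  have hol': "deriv \<phi> holomorphic_on ball 0 1" "deriv (deriv \<phi>) holomorphic_on ball 0 1"
    using hol by (simp_all add: holomorphic_deriv)
  show "of_real t * w \<in> ball 0 1" if "w \<in> ball 0 1" "t \<in> {0..1}" for w :: complex and t
    using that mult_left_le_one_le[of "norm w" t] by (simp add: norm_mult)
  show "((\<lambda>w. P (\<phi> w) * deriv \<phi> w) has_derivative
       (\<lambda>a. (\<alpha> (\<phi> w) * (deriv \<phi> w)\<^sup>2 + P (\<phi> w) * deriv (deriv \<phi>) w) * a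
          + (\<beta> (\<phi> w) * deriv \<phi> w * cnj (deriv \<phi> w)) * cnj a)) (at w)" if "w \<in> ball 0 1" for w
    using that hol hol' into by (intro has_derivative_pullback DP) (auto intro: holomorphic_derivI)
  have "continuous_on S P"
    using DP has_derivative_continuous continuous_at_imp_continuous_on by blast
  note comp = continuous_on_compose2[OF _ holomorphic_on_imp_continuous_on[OF hol] into]
  show "continuous_on (ball 0 1) (\<lambda>w. \<alpha> (\<phi> w) * (deriv \<phi> w)\<^sup>2 + P (\<phi> w) * deriv (deriv \<phi>) w)"
    "continuous_on (ball 0 1) (\<lambda>w. \<beta> (\<phi> w) * deriv \<phi> w * cnj (deriv \<phi> w))"
    using \<open>continuous_on S P\<close> holomorphic_on_imp_continuous_on[OF hol'(1)]
      holomorphic_on_imp_continuous_on[OF hol'(2)]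
    by (auto intro!: continuous_intros comp cont)
  show "Im (\<beta> (\<phi> w) * deriv \<phi> w * cnj (deriv \<phi> w)) = 0" if "w \<in> ball 0 1" for w
  proof -
    have "Im (\<beta> (\<phi> w)) = 0" using real that into by blast
    then show ?thesis by (simp add: algebra_simps)
  qed
qed simp

text \<open>The Riemann mapping theorem reduces the simply connected case to the disc, where the
  Poincar\'e lemma applies; holomorphic changes of variable preserve the form of the derivative
  and the reality of the \<open>cnj\<close>-coefficient.\<close>
lemma simply_connected_real_primitive:
  fixes P \<alpha> \<beta> :: "complex \<Rightarrow> complex"
  assumes S: "open S" "simply_connected S"
    and DP: "\<And>z. z \<in> S \<Longrightarrow> (P has_derivative (\<lambda>w. \<alpha> z * w + \<beta> z * cnj w)) (at z)"
    and cont: "continuous_on S \<alpha>" "continuous_on S \<beta>"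
    and real: "\<And>z. z \<in> S \<Longrightarrow> Im (\<beta> z) = 0"
  shows "\<exists>g::complex \<Rightarrow> real. \<forall>z\<in>S. (g has_derivative (\<lambda>w. Re (P z * w))) (at z)"
proof -
  consider "S = {}" | "S = UNIV" | "\<exists>\<psi> \<phi>. \<psi> holomorphic_on S \<and> \<phi> holomorphic_on ball 0 1 \<and>
           (\<forall>z \<in> S. \<psi> z \<in> ball 0 1 \<and> \<phi> (\<psi> z) = z) \<and> (\<forall>z \<in> ball 0 1. \<phi> z \<in> S \<and> \<psi> (\<phi> z) = z)"
    using Riemann_mapping_theorem S by blast
  then show ?thesis
  proof cases
    case 2
    then show ?thesis by (intro star_shaped_real_primitive[OF S(1) _ DP cont real]) simp_all
  next
    case 3
    then obtain \<psi> \<phi> where hol: "\<psi> holomorphic_on S" "\<phi> holomorphic_on ball 0 1"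
      and inv: "\<And>z. z \<in> S \<Longrightarrow> \<psi> z \<in> ball 0 1 \<and> \<phi> (\<psi> z) = z"
      and into: "\<phi> ` ball 0 1 \<subseteq> S"
      by blast
    obtain G :: "complex \<Rightarrow> real"
      where "\<And>w. w \<in> ball 0 1 \<Longrightarrow> (G has_derivative (\<lambda>a. Re (P (\<phi> w) * deriv \<phi> w * a))) (at w)"
      using disc_pullback_real_primitive[OF hol(2) into DP cont real] by blast
    then show ?thesis
      using real_primitive_pullback[OF S(1) hol(2,1) _ inv] by blast
  qed simp
qed

lemma C2_on_real_primitive:
  fixes g :: "complex \<Rightarrow> real"
  assumes S: "open S"
    and g: "\<And>z. z \<in> S \<Longrightarrow> (g has_derivative (\<lambda>w. Re (P z * w))) (at z)"
    and DP: "\<And>z. z \<in> S \<Longrightarrow> (P has_derivative (\<lambda>w. \<alpha> z * w + \<beta> z * cnj w)) (at z)"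
    and cont: "continuous_on S \<alpha>" "continuous_on S \<beta>"
  shows "C2_on S g"
  unfolding C2_on_def
proof (intro conjI ballI)
  have pd_g: "pd g w z = Re (P z * w)" if "z \<in> S" for w z
    using pd_eq[OF g[OF that]] .
  have D2: "((\<lambda>x. Re (P x * w)) has_derivative (\<lambda>v. Re ((\<alpha> z * v + \<beta> z * cnj v) * w))) (at z)"
    if "z \<in> S" for z w
    using DP[OF that] by (auto intro!: derivative_eq_intros)
  show "g differentiable_on S"
    using g by (intro differentiable_at_imp_differentiable_on) (auto simp: differentiable_def)
  fix w assume "w \<in> {1, \<i>}"
  show "pd g w differentiable_on S"
  proof (rule differentiable_at_imp_differentiable_on)
    fix z assume z: "z \<in> S"
    show "pd g w differentiable (at z)"
      by (rule differentiable_cong_open[OF S z _ differentiableI[OF D2[OF z]]]) (simp add: pd_g)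
  qed
  fix w' assume "w' \<in> {1, \<i>}"
  have pd_pd_g: "pd (pd g w) w' z = Re ((\<alpha> z * w' + \<beta> z * cnj w') * w)" if z: "z \<in> S" for z
  proof -
    have "pd (pd g w) w' z = pd (\<lambda>x. Re (P x * w)) w' z"
      by (rule pd_cong[OF S z]) (simp add: pd_g)
    also have "\<dots> = Re ((\<alpha> z * w' + \<beta> z * cnj w') * w)"
      by (rule pd_eq[OF D2[OF z]])
    finally show ?thesis .
  qed
  show "continuous_on S (pd (pd g w) w')"
    by (rule continuous_on_eq[where f = "\<lambda>z. Re ((\<alpha> z * w' + \<beta> z * cnj w') * w)"])
       (use cont pd_pd_g in \<open>auto intro!: continuous_intros\<close>)
qed

lemma simply_connected_real_Dz_primitive:
  fixes G :: "complex \<Rightarrow> complex"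
  assumes S: "open S" "simply_connected S"
    and diff: "\<And>z. z \<in> S \<Longrightarrow> G differentiable (at z)"
    and cont: "continuous_on S (Dz G)" "continuous_on S (Dzbar G)"
    and real: "\<And>z. z \<in> S \<Longrightarrow> Im (Dzbar G z) = 0"
  shows "\<exists>g::complex \<Rightarrow> real. C2_on S g \<and> (\<forall>z\<in>S. Dz (\<lambda>x. complex_of_real (g x)) z = G z)"
proof -
  have D2G: "((\<lambda>z. 2 * G z) has_derivative (\<lambda>w. 2 * Dz G z * w + 2 * Dzbar G z * cnj w)) (at z)"
    if "z \<in> S" for z
    using has_derivative_mult_right[OF has_derivative_Wirtinger[OF diff[OF that]], of 2]
    by (simp add: algebra_simps)
  have cont2: "continuous_on S (\<lambda>z. 2 * Dz G z)" "continuous_on S (\<lambda>z. 2 * Dzbar G z)"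
    using cont by (auto intro!: continuous_intros)
  obtain g :: "complex \<Rightarrow> real" where g: "\<And>z. z \<in> S \<Longrightarrow> (g has_derivative (\<lambda>w. Re (2 * G z * w))) (at z)"
    using simply_connected_real_primitive[OF S D2G cont2] real by auto
  have "C2_on S g"
    by (rule C2_on_real_primitive[OF S(1) g D2G cont2])
  moreover have "Dz (\<lambda>x. complex_of_real (g x)) z = G z" if "z \<in> S" for z
    using Dz_of_real_eqI[OF g[OF that]] by simp
  ultimately show ?thesis by blast
qed

section \<open>Rotating Weierstrass data\<close>

definition rotated_Dz ::
  "real \<Rightarrow> (complex \<Rightarrow> complex) \<Rightarrow> (complex \<Rightarrow> real) \<Rightarrow> (complex \<Rightarrow> real) \<Rightarrow> complex \<Rightarrow> complex" where
  "rotated_Dz \<tau> h M N z = exp (\<i> * \<tau>) * Dz (\<lambda>x. complex_of_real (M x)) z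
     - (exp (\<i> * \<tau>) - exp (- \<i> * \<tau>)) / 2 * h z * Dz (\<lambda>x. complex_of_real (N x)) z"

lemma rotation_Re_eq:
  fixes \<tau> :: real
  shows "exp (\<i> * \<tau>) * of_real (Re a) - (exp (\<i> * \<tau>) - exp (- \<i> * \<tau>)) / 2 * a
    = of_real (Re (exp (- \<i> * \<tau>) * a))"
proof -
  have "exp (\<i> * \<tau>) = cis \<tau>" "exp (- \<i> * \<tau>) = cis (- \<tau>)" by (simp_all add: cis_conv_exp)
  then show ?thesis by (simp add: complex_eq_iff algebra_simps)
qed

lemma has_derivative_rotated_Dz:
  fixes \<tau> :: real
  assumes S: "open S" and C: "C2_on S h" "C2_on S M" "C2_on S N" and z: "z \<in> S"
  defines "E \<equiv> exp (\<i> * complex_of_real \<tau>)"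
    and "c \<equiv> (exp (\<i> * complex_of_real \<tau>) - exp (- \<i> * complex_of_real \<tau>)) / 2"
    and "DM \<equiv> Dz (\<lambda>x. complex_of_real (M x))" and "DN \<equiv> Dz (\<lambda>x. complex_of_real (N x))"
  shows "(rotated_Dz \<tau> h M N has_derivative (\<lambda>w.
           (E * Dz DM z - c * (Dz h z * DN z + h z * Dz DN z)) * w
         + (E * Dzbar DM z - c * (Dzbar h z * DN z + h z * Dzbar DN z)) * cnj w)) (at z)"
proof -
  have "DM differentiable (at z)" "DN differentiable (at z)"
    unfolding DM_def DN_def
    using has_derivative_Dz[OF S C2_on_of_real[OF S C(2)] z] has_derivative_Dz[OF S C2_on_of_real[OF S C(3)] z]
    by (auto simp: differentiable_def)
  note W = has_derivative_Wirtinger[OF this(1)] has_derivative_Wirtinger[OF this(2)]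
    has_derivative_Wirtinger[OF C2_onD(1)[OF S C(1) z]]
  show ?thesis
    unfolding rotated_Dz_def[abs_def] DM_def[symmetric] DN_def[symmetric] c_def[symmetric]
    unfolding E_def[symmetric]
    by (rule has_derivative_eq_rhs, (rule derivative_intros W)+) (simp add: fun_eq_iff algebra_simps)
qed

lemma rotated_Dz_C1:
  assumes S: "open S" and C: "C2_on S h" "C2_on S M" "C2_on S N"
  shows "\<And>z. z \<in> S \<Longrightarrow> rotated_Dz \<tau> h M N differentiable (at z)"
    and "continuous_on S (Dz (rotated_Dz \<tau> h M N))" "continuous_on S (Dzbar (rotated_Dz \<tau> h M N))"
proof -
  note D = has_derivative_rotated_Dz[OF S C]
  show "rotated_Dz \<tau> h M N differentiable (at z)" if "z \<in> S" for z
    using D[OF that] by (rule differentiableI)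
  note cont = C2_on_continuous_Wirtinger[OF S C(1)]
    C2_on_continuous_Wirtinger[OF S C2_on_of_real[OF S C(2)]]
    C2_on_continuous_Wirtinger[OF S C2_on_of_real[OF S C(3)]]
  have ch: "continuous_on S h"
    using C(1) by (auto simp: C2_on_def intro: differentiable_imp_continuous_on)
  show "continuous_on S (Dz (rotated_Dz \<tau> h M N))"
    by (rule continuous_on_eq[OF _ Wirtinger_eqI(1)[OF D, symmetric]])
       (use cont ch in \<open>auto intro!: continuous_intros\<close>)
  show "continuous_on S (Dzbar (rotated_Dz \<tau> h M N))"
    by (rule continuous_on_eq[OF _ Wirtinger_eqI(2)[OF D, symmetric]])
       (use cont ch in \<open>auto intro!: continuous_intros\<close>)
qed

lemma Dzbar_rotated_Dz:
  assumes S: "open S" and W: "weierstrass_data_2 S h M N" and z: "z \<in> S"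
  shows "Dzbar (rotated_Dz \<tau> h M N) z
    = of_real (Re (exp (- \<i> * \<tau>) * h z)) * Dzbar (Dz (\<lambda>x. complex_of_real (N x))) z"
proof -
  have C: "C2_on S h" "C2_on S M" "C2_on S N" and hol: "Dzbar h z = 0"
    and eq: "Dzbar (Dz (\<lambda>x. complex_of_real (M x))) z
      = of_real (Re (h z)) * Dzbar (Dz (\<lambda>x. complex_of_real (N x))) z"
    using W z unfolding weierstrass_data_2_def by auto
  have "Dzbar (rotated_Dz \<tau> h M N) z = (exp (\<i> * \<tau>) * of_real (Re (h z))
      - (exp (\<i> * \<tau>) - exp (- \<i> * \<tau>)) / 2 * h z) * Dzbar (Dz (\<lambda>x. complex_of_real (N x))) z"
    unfolding Wirtinger_eqI(2)[OF has_derivative_rotated_Dz[OF S C z]] hol eq by (simp add: algebra_simps)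
  then show ?thesis by (simp only: rotation_Re_eq)
qed

lemma rotated_Dz_real_primitive:
  assumes S: "open S" "simply_connected S" and W: "weierstrass_data_2 S h M N"
  shows "\<exists>M\<tau> :: complex \<Rightarrow> real. C2_on S M\<tau> \<and>
           (\<forall>z\<in>S. Dz (\<lambda>x. complex_of_real (M\<tau> x)) z = rotated_Dz \<tau> h M N z)"
proof (rule simply_connected_real_Dz_primitive[OF S])
  have C: "C2_on S h" "C2_on S M" "C2_on S N"
    using W unfolding weierstrass_data_2_def by auto
  show "\<And>z. z \<in> S \<Longrightarrow> rotated_Dz \<tau> h M N differentiable (at z)"
    "continuous_on S (Dz (rotated_Dz \<tau> h M N))" "continuous_on S (Dzbar (rotated_Dz \<tau> h M N))"
    using rotated_Dz_C1[OF S(1) C] by auto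
  show "Im (Dzbar (rotated_Dz \<tau> h M N) z) = 0" if "z \<in> S" for z
    using Im_Dzbar_Dz_of_real[OF S(1) C(3) that] by (simp add: Dzbar_rotated_Dz[OF S(1) W that])
qed

lemma weierstrass_data_2_rotate:
  fixes \<tau> :: real
  assumes S: "open S" and W: "weierstrass_data_2 S h M N" and CM\<tau>: "C2_on S M\<tau>"
    and DM\<tau>: "\<And>z. z \<in> S \<Longrightarrow> Dz (\<lambda>x. complex_of_real (M\<tau> x)) z = rotated_Dz \<tau> h M N z"
  shows "weierstrass_data_2 S (\<lambda>z. exp (- \<i> * \<tau>) * h z) M\<tau> N"
proof -
  have C: "C2_on S h" "C2_on S N" and hnz: "\<And>z. z \<in> S \<Longrightarrow> h z \<noteq> 0"
    and hol: "\<And>z. z \<in> S \<Longrightarrow> Dzbar h z = 0"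
    and nondeg: "\<And>z. z \<in> S \<Longrightarrow> Dz (\<lambda>x. complex_of_real (M x)) z
      - of_real (Re (h z)) * Dz (\<lambda>x. complex_of_real (N x)) z \<noteq> 0"
    using W unfolding weierstrass_data_2_def by auto
  have "C2_on S (\<lambda>z. exp (- \<i> * \<tau>) * h z)"
    by (rule C2_on_bounded_linear[OF bounded_linear_mult_right S C(1)])
  moreover have "Dzbar (\<lambda>z. exp (- \<i> * \<tau>) * h z) z = 0" if z: "z \<in> S" for z
    using Dzbar_cmult[OF C2_onD(1)[OF S C(1) z]] hol[OF z] by simp
  moreover have "Dzbar (Dz (\<lambda>x. complex_of_real (M\<tau> x))) z
      = of_real (Re (exp (- \<i> * \<tau>) * h z)) * Dzbar (Dz (\<lambda>x. complex_of_real (N x))) z" if z: "z \<in> S" for z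
    using Dzbar_cong[OF S z DM\<tau>] Dzbar_rotated_Dz[OF S W z] by simp
  moreover have "Dz (\<lambda>x. complex_of_real (M\<tau> x)) z
      - of_real (Re (exp (- \<i> * \<tau>) * h z)) * Dz (\<lambda>x. complex_of_real (N x)) z \<noteq> 0" if z: "z \<in> S" for z
  proof -
    have "Dz (\<lambda>x. complex_of_real (M\<tau> x)) z - of_real (Re (exp (- \<i> * \<tau>) * h z)) * Dz (\<lambda>x. complex_of_real (N x)) z
        = exp (\<i> * \<tau>) * (Dz (\<lambda>x. complex_of_real (M x)) z - of_real (Re (h z)) * Dz (\<lambda>x. complex_of_real (N x)) z)"
      unfolding DM\<tau>[OF z] rotated_Dz_def rotation_Re_eq[symmetric] by (simp add: algebra_simps)
    then show ?thesis using nondeg[OF z] by simp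
  qed
  ultimately show ?thesis
    using CM\<tau> C(2) hnz unfolding weierstrass_data_2_def by simp
qed

theorem mainTheorem4:
  fixes \<Omega> :: "complex set" and h :: "complex \<Rightarrow> complex" and M N :: "complex \<Rightarrow> real"
    and \<tau> :: real
  assumes "open \<Omega>" and "connected \<Omega>" and "simply_connected \<Omega>"
    and "weierstrass_data_2 \<Omega> h M N"
  shows "(\<exists>M\<tau> :: complex \<Rightarrow> real. C2_on \<Omega> M\<tau> \<and>
            (\<forall>z \<in> \<Omega>. Dz (\<lambda>x. complex_of_real (M\<tau> x)) z
               = exp (\<i> * \<tau>) * Dz (\<lambda>x. complex_of_real (M x)) z
                 - (exp (\<i> * \<tau>) - exp (- \<i> * \<tau>)) / 2 * h z * Dz (\<lambda>x. complex_of_real (N x)) z))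
       \<and> (\<forall>M\<tau> :: complex \<Rightarrow> real. C2_on \<Omega> M\<tau> \<and>
            (\<forall>z \<in> \<Omega>. Dz (\<lambda>x. complex_of_real (M\<tau> x)) z
               = exp (\<i> * \<tau>) * Dz (\<lambda>x. complex_of_real (M x)) z
                 - (exp (\<i> * \<tau>) - exp (- \<i> * \<tau>)) / 2 * h z * Dz (\<lambda>x. complex_of_real (N x)) z)
            \<longrightarrow> weierstrass_data_2 \<Omega> (\<lambda>z. exp (- \<i> * \<tau>) * h z) M\<tau> N)"
proof -
  have "\<exists>M\<tau>. C2_on \<Omega> M\<tau> \<and> (\<forall>z\<in>\<Omega>. Dz (\<lambda>x. complex_of_real (M\<tau> x)) z = rotated_Dz \<tau> h M N z)"
    using rotated_Dz_real_primitive[OF assms(1,3,4)] .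
  moreover have "weierstrass_data_2 \<Omega> (\<lambda>z. exp (- \<i> * \<tau>) * h z) M\<tau> N"
    if "C2_on \<Omega> M\<tau>" "\<forall>z\<in>\<Omega>. Dz (\<lambda>x. complex_of_real (M\<tau> x)) z = rotated_Dz \<tau> h M N z" for M\<tau>
    using weierstrass_data_2_rotate[OF assms(1,4) that(1)] that(2) by blast
  ultimately show ?thesis unfolding rotated_Dz_def by blast
qed

end
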